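(* Let $G^1$ be a 1-wconnected 1-graph with infinitely many boundary 1-nodes such that ${}^{*}G^1$ has a hypernode not in its principal 1-galaxy $\Gamma_0^1$. Let $\Gamma_a^1,\Gamma_b^1,\Gamma_c^1$ be 1-galaxies different from $\Gamma_0^1$. If $\Gamma_a^1$ is closer to $\Gamma_0^1$ than is $\Gamma_b^1$, and $\Gamma_b^1$ is closer to $\Gamma_0^1$ than is $\Gamma_c^1$, then $\Gamma_a^1$ is closer to $\Gamma_0^1$ than is $\Gamma_c^1$. Thus the 1-galaxies are partially ordered according to their closeness to $\Gamma_0^1$.
   Context: 1-graphs. A 1-graph $G^1=\{X^0,B,X^1\}$ consists of a graph $G^0=\{X^0,B\}$ (0-nodes, with branches as two-element sets) and 1-nodes. The 1-nodes are obtained by partitioning the 0-tips of $G^0$ (classes of eventually identical one-ended paths) into subsets, some augmented by a single 0-node (each 0-node used at most once). Wdistance. The wdistance $d(x,y)$ is the minimum ordinal length of a two-ended 0-walk or 1-walk terminating at $x$ and $y$. A finite 0-walk has length equal to its number of branch traversals; each 0-tip traversal contributes $\omega$; 1-walk lengths are natural sums. Thus $d<\omega^2$. $\oplus$ denotes the natural sum of ordinals. 1-wconnected: any two nodes are joined by such a walk. A 0-section is the subgraph of $G^0$ induced by a maximal set of pairwise path-connected branches. A boundary 1-node is a 1-node incident to at least two 0-sections. Enlargement. Fix a free ultrafilter $\mathcal F$ on $\mathbb N$. Hypernodes are classes $[x_n]$ of sequences of 0-nodes or of 1-nodes, modulo agreement on a set in $\mathcal F$. A standard hypernode is the class of a constant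 sequence. 1-galaxies. Hypernodes $[x_n],[y_n]$ are 1-limitedly distant if $\{n:d(x_n,y_n)\le\omega\cdot k\}\in\mathcal F$ for some $k\in\mathbb N$. 1-galaxies are the equivalence classes of this relation together with the hyperbranches between their 0-hypernodes. The principal 1-galaxy $\Gamma_0^1$ contains the standard hypernodes. Closeness. For 1-galaxies $\Gamma_a^1,\Gamma_b^1\ne\Gamma_0^1$, $\Gamma^1_a$ is closer to $\Gamma_0^1$ than is $\Gamma_b^1$ if there exist $[y_n]\in\Gamma_a^1$, $[z_n]\in\Gamma_b^1$ and $[x_n]\in\Gamma_0^1$ with $\{n: d(z_n,x_n)\ge d(y_n,x_n)\oplus\omega\cdot m\}\in\mathcal F$ for every $m\in\mathbb N$. *)

theory Defs
  imports Main
begin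

text \<open>W a b represents the ordinal omega*a + b.  Addition is the natural
(Hessenberg) sum, which for ordinals below omega^2 is componentwise.\<close>

datatype w2 = W nat nat

instantiation w2 :: linorder
begin
definition less_eq_w2 :: "w2 \<Rightarrow> w2 \<Rightarrow> bool" where
  "less_eq_w2 x y = (case x of W a b \<Rightarrow> case y of W c d \<Rightarrow> a < c \<or> (a = c \<and> b \<le> d))"
definition less_w2 :: "w2 \<Rightarrow> w2 \<Rightarrow> bool" where
  "less_w2 x y = (x \<le> y \<and> \<not> y \<le> x)"
instance
proof
  fix x y z :: w2
  show "(x < y) = (x \<le> y \<and> \<not> y \<le> x)" by (simp add: less_w2_def)
  show "x \<le> x" by (cases x) (simp add: less_eq_w2_def)
  show "x \<le> y \<Longrightarrow> y \<le> z \<Longrightarrow> x \<le> z"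
    by (cases x; cases y; cases z) (auto simp: less_eq_w2_def)
  show "x \<le> y \<Longrightarrow> y \<le> x \<Longrightarrow> x = y"
    by (cases x; cases y) (auto simp: less_eq_w2_def)
  show "x \<le> y \<or> y \<le> x"
    by (cases x; cases y) (auto simp: less_eq_w2_def)
qed
end

instantiation w2 :: comm_monoid_add
begin
definition zero_w2 :: w2 where "zero_w2 = W 0 0"
definition plus_w2 :: "w2 \<Rightarrow> w2 \<Rightarrow> w2" where
  "plus_w2 x y = (case x of W a b \<Rightarrow> case y of W c d \<Rightarrow> W (a + c) (b + d))"
instance
proof
  fix x y z :: w2
  show "x + y + z = x + (y + z)" by (cases x; cases y; cases z) (simp add: plus_w2_def)
  show "x + y = y + x" by (cases x; cases y) (simp add: plus_w2_def)
  show "0 + x = x" by (cases x) (simp add: plus_w2_def zero_w2_def)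
qed
end

definition omega_times :: "nat \<Rightarrow> w2" where "omega_times m = W m 0"

type_synonym 'v tip = "(nat \<Rightarrow> 'v) set"
type_synonym 'v node1 = "'v tip set \<times> 'v option"

datatype 'v gnode = Node0 'v | Node1 "'v node1"

definition onepath :: "'v set set \<Rightarrow> (nat \<Rightarrow> 'v) \<Rightarrow> bool" where
  "onepath B p \<longleftrightarrow> inj p \<and> (\<forall>i. {p i, p (Suc i)} \<in> B)"

definition tipeq :: "(nat \<Rightarrow> 'v) \<Rightarrow> (nat \<Rightarrow> 'v) \<Rightarrow> bool" where
  "tipeq p q \<longleftrightarrow> (\<exists>i j. \<forall>k. p (i + k) = q (j + k))"

definition tip_of :: "'v set set \<Rightarrow> (nat \<Rightarrow> 'v) \<Rightarrow> 'v tip" where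
  "tip_of B p = {q. onepath B q \<and> tipeq p q}"

definition tips :: "'v set set \<Rightarrow> 'v tip set" where
  "tips B = {tip_of B p | p. onepath B p}"

text \<open>1-graph: branches are two-element sets of 0-nodes; the tip sets of the
1-nodes partition the 0-tips into nonempty classes; each 1-node may be
augmented by a single 0-node, each 0-node used at most once.\<close>
definition one_graph :: "'v set \<Rightarrow> 'v set set \<Rightarrow> 'v node1 set \<Rightarrow> bool" where
  "one_graph X0 B X1 \<longleftrightarrow>
     (\<forall>b\<in>B. \<exists>u v. u \<noteq> v \<and> b = {u, v} \<and> u \<in> X0 \<and> v \<in> X0) \<and>
     (\<forall>N\<in>X1. fst N \<noteq> {} \<and> fst N \<subseteq> tips B \<and>
        (\<forall>v. snd N = Some v \<longrightarrow> v \<in> X0)) \<and>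
     (\<forall>t\<in>tips B. \<exists>!N. N \<in> X1 \<and> t \<in> fst N) \<and>
     (\<forall>N\<in>X1. \<forall>N'\<in>X1. \<forall>v. snd N = Some v \<and> snd N' = Some v \<longrightarrow> N = N')"

definition gnodes :: "'v set \<Rightarrow> 'v node1 set \<Rightarrow> 'v gnode set" where
  "gnodes X0 X1 = Node0 ` X0 \<union> Node1 ` X1"

text \<open>A 0-walk segment (lo, hi, f): the nodes f i for i in the (possibly
unbounded) integer interval from lo to hi; None means unbounded (the walk
is one-ended/endless on that side and must eventually be a one-ended path,
i.e. it is extended and traverses the 0-tip of that path).\<close>
type_synonym 'v seg = "int option \<times> int option \<times> (int \<Rightarrow> 'v)"

definition in_rng :: "int option \<Rightarrow> int option \<Rightarrow> int \<Rightarrow> bool" where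
  "in_rng lo hi i \<longleftrightarrow> (case lo of None \<Rightarrow> True | Some a \<Rightarrow> a \<le> i) \<and>
                       (case hi of None \<Rightarrow> True | Some b \<Rightarrow> i \<le> b)"

definition is_seg :: "'v set \<Rightarrow> 'v set set \<Rightarrow> 'v seg \<Rightarrow> bool" where
  "is_seg X0 B s = (case s of (lo, hi, f) \<Rightarrow>
     (\<forall>a b. lo = Some a \<and> hi = Some b \<longrightarrow> a \<le> b) \<and>
     (\<forall>i. in_rng lo hi i \<longrightarrow> f i \<in> X0) \<and>
     (\<forall>i. in_rng lo hi i \<and> in_rng lo hi (i + 1) \<longrightarrow> {f i, f (i + 1)} \<in> B) \<and>
     (hi = None \<longrightarrow> (\<exists>m. in_rng lo hi m \<and> onepath B (\<lambda>k. f (m + int k)))) \<and>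
     (lo = None \<longrightarrow> (\<exists>m. in_rng lo hi m \<and> onepath B (\<lambda>k. f (m - int k)))))"

text \<open>The left / right end of a segment reaches node x: a finite end reaches
its 0-node and the 1-node embracing it; an infinite end reaches the 1-node
containing the 0-tip it traverses.\<close>
definition reachL :: "'v set set \<Rightarrow> 'v node1 set \<Rightarrow> 'v seg \<Rightarrow> 'v gnode \<Rightarrow> bool" where
  "reachL B X1 s x = (case s of (lo, hi, f) \<Rightarrow>
     (case lo of
        Some a \<Rightarrow> x = Node0 (f a) \<or> (\<exists>N\<in>X1. x = Node1 N \<and> snd N = Some (f a))
      | None \<Rightarrow> (\<exists>N\<in>X1. x = Node1 N \<and> (\<exists>m. in_rng lo hi m \<and>
                   onepath B (\<lambda>k. f (m - int k)) \<and> tip_of B (\<lambda>k. f (m - int k)) \<in> fst N))))"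

definition reachR :: "'v set set \<Rightarrow> 'v node1 set \<Rightarrow> 'v seg \<Rightarrow> 'v gnode \<Rightarrow> bool" where
  "reachR B X1 s x = (case s of (lo, hi, f) \<Rightarrow>
     (case hi of
        Some b \<Rightarrow> x = Node0 (f b) \<or> (\<exists>N\<in>X1. x = Node1 N \<and> snd N = Some (f b))
      | None \<Rightarrow> (\<exists>N\<in>X1. x = Node1 N \<and> (\<exists>m. in_rng lo hi m \<and>
                   onepath B (\<lambda>k. f (m + int k)) \<and> tip_of B (\<lambda>k. f (m + int k)) \<in> fst N))))"

text \<open>Length of a segment: finite two-ended: number of branch traversals;
one-ended: omega; endless: omega*2.\<close>
definition seg_len :: "'v seg \<Rightarrow> w2" where
  "seg_len s = (case s of (lo, hi, f) \<Rightarrow>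
     (case (lo, hi) of (Some a, Some b) \<Rightarrow> W 0 (nat (b - a))
       | _ \<Rightarrow> W ((if lo = None then 1 else 0) + (if hi = None then 1 else 0)) 0))"

text \<open>A two-ended 0-walk or 1-walk from x to y: a nonempty list of 0-walk
segments, consecutive ones meeting at 1-nodes (listed in js).\<close>
definition walk :: "'v set \<Rightarrow> 'v set set \<Rightarrow> 'v node1 set \<Rightarrow> 'v gnode \<Rightarrow> 'v gnode
                     \<Rightarrow> 'v seg list \<Rightarrow> 'v gnode list \<Rightarrow> bool" where
  "walk X0 B X1 x y segs js \<longleftrightarrow>
     segs \<noteq> [] \<and> length js = length segs - 1 \<and>
     (\<forall>s\<in>set segs. is_seg X0 B s) \<and>
     (\<forall>j\<in>set js. \<exists>N\<in>X1. j = Node1 N) \<and>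
     reachL B X1 (hd segs) x \<and> reachR B X1 (last segs) y \<and>
     (\<forall>i<length js. reachR B X1 (segs ! i) (js ! i) \<and> reachL B X1 (segs ! Suc i) (js ! i))"

definition walk_len :: "'v seg list \<Rightarrow> w2" where
  "walk_len segs = sum_list (map seg_len segs)"

definition wdist :: "'v set \<Rightarrow> 'v set set \<Rightarrow> 'v node1 set \<Rightarrow> 'v gnode \<Rightarrow> 'v gnode \<Rightarrow> w2" where
  "wdist X0 B X1 x y = (LEAST l. \<exists>segs js. walk X0 B X1 x y segs js \<and> l = walk_len segs)"

definition wconnected :: "'v set \<Rightarrow> 'v set set \<Rightarrow> 'v node1 set \<Rightarrow> bool" where
  "wconnected X0 B X1 \<longleftrightarrow>
     (\<forall>x\<in>gnodes X0 X1. \<forall>y\<in>gnodes X0 X1. \<exists>segs js. walk X0 B X1 x y segs js)"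

definition adj :: "'v set set \<Rightarrow> ('v \<times> 'v) set" where
  "adj B = {(u, w). {u, w} \<in> B}"

definition bconn :: "'v set set \<Rightarrow> 'v set \<Rightarrow> 'v set \<Rightarrow> bool" where
  "bconn B b b' \<longleftrightarrow> (\<exists>u\<in>b. \<exists>w\<in>b'. (u, w) \<in> (adj B)\<^sup>*)"

text \<open>0-sections, represented by their (maximal) branch sets\<close>
definition sections0 :: "'v set set \<Rightarrow> 'v set set set" where
  "sections0 B = {{b'\<in>B. bconn B b b'} | b. b \<in> B}"

definition incident1 :: "'v node1 \<Rightarrow> 'v set set \<Rightarrow> bool" where
  "incident1 N S \<longleftrightarrow> (\<exists>t\<in>fst N. \<exists>p\<in>t. \<forall>i. {p i, p (Suc i)} \<in> S) \<or>
                     (\<exists>v. snd N = Some v \<and> (\<exists>b\<in>S. v \<in> b))"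

definition boundary_nodes :: "'v set \<Rightarrow> 'v set set \<Rightarrow> 'v node1 set \<Rightarrow> 'v node1 set" where
  "boundary_nodes X0 B X1 = {N\<in>X1. \<exists>S1\<in>sections0 B. \<exists>S2\<in>sections0 B.
       S1 \<noteq> S2 \<and> incident1 N S1 \<and> incident1 N S2}"

definition free_ultrafilter :: "nat filter \<Rightarrow> bool" where
  "free_ultrafilter F \<longleftrightarrow> F \<noteq> bot \<and>
     (\<forall>P. eventually P F \<or> eventually (\<lambda>n. \<not> P n) F) \<and>
     (\<forall>n. eventually (\<lambda>k. k \<noteq> n) F)"

text \<open>Representatives of hypernodes: sequences of 0-nodes or of 1-nodes.
(A hypernode is the class of such a sequence modulo agreement on a set in F;
all notions below are invariant under this agreement.)\<close>
definition hypernode :: "'v set \<Rightarrow> 'v node1 set \<Rightarrow> (nat \<Rightarrow> 'v gnode) \<Rightarrow> bool" where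
  "hypernode X0 X1 x \<longleftrightarrow> (\<forall>n. \<exists>v\<in>X0. x n = Node0 v) \<or> (\<forall>n. \<exists>N\<in>X1. x n = Node1 N)"

definition ldist :: "'v set \<Rightarrow> 'v set set \<Rightarrow> 'v node1 set \<Rightarrow> nat filter
                      \<Rightarrow> (nat \<Rightarrow> 'v gnode) \<Rightarrow> (nat \<Rightarrow> 'v gnode) \<Rightarrow> bool" where
  "ldist X0 B X1 F x y \<longleftrightarrow>
     (\<exists>k::nat. eventually (\<lambda>n. wdist X0 B X1 (x n) (y n) \<le> omega_times k) F)"

definition galaxy1 :: "'v set \<Rightarrow> 'v set set \<Rightarrow> 'v node1 set \<Rightarrow> nat filter
                        \<Rightarrow> (nat \<Rightarrow> 'v gnode) set \<Rightarrow> bool" where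
  "galaxy1 X0 B X1 F \<Gamma> \<longleftrightarrow>
     (\<exists>x. hypernode X0 X1 x \<and> \<Gamma> = {y. hypernode X0 X1 y \<and> ldist X0 B X1 F x y})"

definition principal_galaxy :: "'v set \<Rightarrow> 'v set set \<Rightarrow> 'v node1 set \<Rightarrow> nat filter
                                 \<Rightarrow> (nat \<Rightarrow> 'v gnode) set" where
  "principal_galaxy X0 B X1 F =
     {y. hypernode X0 X1 y \<and> (\<exists>s\<in>gnodes X0 X1. ldist X0 B X1 F (\<lambda>_. s) y)}"

definition closer :: "'v set \<Rightarrow> 'v set set \<Rightarrow> 'v node1 set \<Rightarrow> nat filter
     \<Rightarrow> (nat \<Rightarrow> 'v gnode) set \<Rightarrow> (nat \<Rightarrow> 'v gnode) set \<Rightarrow> bool" where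
  "closer X0 B X1 F Ga Gb \<longleftrightarrow>
     (\<exists>y\<in>Ga. \<exists>z\<in>Gb. \<exists>x\<in>principal_galaxy X0 B X1 F.
        \<forall>m::nat. eventually (\<lambda>n. wdist X0 B X1 (z n) (x n) \<ge>
                                   wdist X0 B X1 (y n) (x n) + omega_times m) F)"

end

theory Submission
  imports Defs
begin

text \<open>Transitivity of closeness only uses that the wdistance d is a pseudometric on the nodes
  of a 1-wconnected 1-graph. Symmetry comes from reversing walks; the triangle inequality from
  concatenating walks, by juxtaposition at a 1-node and by gluing the two end segments at a
  0-node, neither of which increases the length; and d is attained since ordinals are well
  ordered. Now let y, z, x and y', z', x' witness the two closeness hypotheses. As z and y'
  lie in the same 1-galaxy and x, x' in the principal one, eventually d(z, y') is at most
  \<omega>a and d(x, x') at most \<omega>b. Eventually d(y, x) + \<omega>(m + a + 2b) is at most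
  d(z, x), which is at most d(z, y') + d(y', x') + d(x', x), which is at most
  \<omega>a + d(z', x) + \<omega>(2b), and the natural sum is cancellative.\<close>

section \<open>The ordinals below \<omega>^2\<close>

lemma W_le_iff [simp]: "W a b \<le> W c d \<longleftrightarrow> a < c \<or> (a = c \<and> b \<le> d)"
  by (simp add: less_eq_w2_def)

lemma W_plus [simp]: "W a b + W c d = W (a + c) (b + d)"
  by (simp add: plus_w2_def)

text \<open>Truncated subtraction only serves to make w2 an instance of the
  cancellative ordered monoid classes.\<close>

instantiation w2 :: minus
begin
definition minus_w2 :: "w2 \<Rightarrow> w2 \<Rightarrow> w2" where
  "minus_w2 x y = (case x of W a b \<Rightarrow> case y of W c d \<Rightarrow> W (a - c) (b - d))"
instance ..
end

instance w2 :: ordered_cancel_comm_monoid_add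
proof
  fix x y z :: w2
  show "x \<le> y \<Longrightarrow> z + x \<le> z + y" by (cases x; cases y; cases z) auto
  show "x + y - x = y" by (cases x; cases y) (simp add: minus_w2_def)
  show "x - y - z = x - (y + z)" by (cases x; cases y; cases z) (simp add: minus_w2_def)
qed

instance w2 :: ordered_ab_semigroup_add_imp_le
proof
  fix x y z :: w2
  show "z + x \<le> z + y \<Longrightarrow> x \<le> y" by (cases x; cases y; cases z) auto
qed

instance w2 :: wellorder
proof
  fix P :: "w2 \<Rightarrow> bool" and x :: w2
  assume step: "\<And>x. (\<And>y. y < x \<Longrightarrow> P y) \<Longrightarrow> P x"
  define pair where "pair = (\<lambda>x. case x of W a b \<Rightarrow> (a, b))"
  have lex: "(y, x) \<in> inv_image (less_than <*lex*> less_than) pair" if "y < x" for x y :: w2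
    using that by (cases x; cases y) (auto simp: pair_def less_le_not_le)
  show "P x"
    by (induct x rule: wf_induct[OF wf_inv_image[of "less_than <*lex*> less_than" pair,
          OF wf_lex_prod[OF wf_less_than wf_less_than]]])
      (metis step lex)
qed

lemma omega_times_add: "omega_times (k + l) = omega_times k + omega_times l"
  by (simp add: omega_times_def)

lemma omega_times_0 [simp]: "omega_times 0 = 0"
  by (simp add: omega_times_def zero_w2_def)

lemma le_omega_times: "\<exists>k. (x::w2) \<le> omega_times k"
  by (cases x) (auto simp: omega_times_def intro: exI[of _ "Suc _"])

lemma walk_len_Nil [simp]: "walk_len [] = 0"
  by (simp add: walk_len_def)

lemma walk_len_Cons [simp]: "walk_len (s # ss) = seg_len s + walk_len ss"
  by (simp add: walk_len_def)

lemma walk_len_append [simp]: "walk_len (ss @ ts) = walk_len ss + walk_len ts"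
  by (simp add: walk_len_def)

lemma walk_Nil [simp]: "\<not> walk X0 B X1 x y [] js"
  by (simp add: walk_def)

lemma walk_single:
  "walk X0 B X1 x y [s] js \<longleftrightarrow> js = [] \<and> is_seg X0 B s \<and> reachL B X1 s x \<and> reachR B X1 s y"
  by (auto simp: walk_def)

lemma walk_Cons:
  assumes "ss \<noteq> []"
  shows "walk X0 B X1 x y (s # ss) js \<longleftrightarrow>
    (\<exists>j js'. js = j # js' \<and> is_seg X0 B s \<and> reachL B X1 s x \<and> reachR B X1 s j \<and>
       j \<in> Node1 ` X1 \<and> walk X0 B X1 j y ss js')"
proof (cases js)
  case Nil
  then show ?thesis using assms by (simp add: walk_def)
next
  case (Cons j js')
  then show ?thesis using assms
    by (cases ss) (auto simp: walk_def All_less_Suc2)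
qed

lemma walk_append:
  assumes "walk X0 B X1 x j ss js" "j \<in> Node1 ` X1" "walk X0 B X1 j y ts ks"
  shows "walk X0 B X1 x y (ss @ ts) (js @ j # ks)"
  using assms(1)
proof (induction ss arbitrary: x js)
  case Nil
  then show ?case by simp
next
  case (Cons s ss)
  have "ts \<noteq> []" using assms(3) by auto
  show ?case
  proof (cases "ss = []")
    case True
    then show ?thesis using Cons.prems assms(2,3) \<open>ts \<noteq> []\<close> by (simp add: walk_single walk_Cons)
  next
    case False
    then show ?thesis using Cons by (auto simp: walk_Cons)
  qed
qed

section \<open>Reversing, shifting and gluing segments\<close>

definition seg_reverse :: "'v seg \<Rightarrow> 'v seg" where
  "seg_reverse s = (case s of (lo, hi, f) \<Rightarrow> (map_option uminus hi, map_option uminus lo, \<lambda>i. f (- i)))"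

lemma seg_reverse_reverse [simp]: "seg_reverse (seg_reverse s) = s"
  by (cases s) (simp add: seg_reverse_def option.map_comp o_def option.map_ident)

lemma seg_len_reverse [simp]: "seg_len (seg_reverse s) = seg_len s"
  by (cases s) (auto simp: seg_reverse_def seg_len_def split: option.splits)

lemma in_rng_reverse:
  "in_rng (map_option uminus hi) (map_option uminus lo) i \<longleftrightarrow> in_rng lo hi (- i)"
  by (cases lo; cases hi) (auto simp: in_rng_def)

lemma ex_uminus_iff: "(\<exists>m::int. Q (- m)) \<longleftrightarrow> (\<exists>m. Q m)"
  by (metis minus_minus)

lemma ex_in_rng_reverse_up:
  "(\<exists>m. in_rng (map_option uminus hi) (map_option uminus lo) m \<and> P (\<lambda>k. f (- (m - int k))))
   \<longleftrightarrow> (\<exists>m. in_rng lo hi m \<and> P (\<lambda>k. f (m + int k)))"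
proof -
  have "(\<lambda>k. f (- (m - int k))) = (\<lambda>k. f (- m + int k))" for m
    by simp
  then show ?thesis
    using ex_uminus_iff[of "\<lambda>n. in_rng lo hi n \<and> P (\<lambda>k. f (n + int k))"]
    by (simp only: in_rng_reverse)
qed

lemma ex_in_rng_reverse_down:
  "(\<exists>m. in_rng (map_option uminus hi) (map_option uminus lo) m \<and> P (\<lambda>k. f (- (m + int k))))
   \<longleftrightarrow> (\<exists>m. in_rng lo hi m \<and> P (\<lambda>k. f (m - int k)))"
proof -
  have "(\<lambda>k. f (- (m + int k))) = (\<lambda>k. f (- m - int k))" for m
    by simp
  then show ?thesis
    using ex_uminus_iff[of "\<lambda>n. in_rng lo hi n \<and> P (\<lambda>k. f (n - int k))"]
    by (simp only: in_rng_reverse)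
qed

lemma is_seg_reverse:
  assumes "is_seg X0 B s"
  shows "is_seg X0 B (seg_reverse s)"
proof -
  obtain lo hi f where s: "s = (lo, hi, f)" by (cases s) auto
  let ?lo = "map_option uminus hi" and ?hi = "map_option uminus lo"
  have ends: "\<forall>a b. ?lo = Some a \<and> ?hi = Some b \<longrightarrow> a \<le> b"
    using assms by (auto simp: s is_seg_def)
  have nodes: "\<forall>i. in_rng ?lo ?hi i \<longrightarrow> f (- i) \<in> X0"
    using assms by (simp add: s is_seg_def in_rng_reverse)
  have "{f (- i), f (- (i + 1))} \<in> B" if "in_rng ?lo ?hi i" "in_rng ?lo ?hi (i + 1)" for i
  proof -
    have "in_rng lo hi (- i - 1) \<and> in_rng lo hi (- i - 1 + 1)"
      using that by (simp add: in_rng_reverse)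
    then show ?thesis using assms by (auto simp: s is_seg_def insert_commute)
  qed
  then have branches: "\<forall>i. in_rng ?lo ?hi i \<and> in_rng ?lo ?hi (i + 1) \<longrightarrow> {f (- i), f (- (i + 1))} \<in> B"
    by blast
  have up: "?hi = None \<longrightarrow> (\<exists>m. in_rng ?lo ?hi m \<and> onepath B (\<lambda>k. f (- (m + int k))))"
    unfolding ex_in_rng_reverse_down[of hi lo "onepath B" f] using assms by (simp add: s is_seg_def)
  have down: "?lo = None \<longrightarrow> (\<exists>m. in_rng ?lo ?hi m \<and> onepath B (\<lambda>k. f (- (m - int k))))"
    unfolding ex_in_rng_reverse_up[of hi lo "onepath B" f] using assms by (simp add: s is_seg_def)
  show ?thesis
    using ends nodes branches up down by (simp only: s seg_reverse_def is_seg_def prod.case)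
qed

lemma reachL_seg_reverse [simp]: "reachL B X1 (seg_reverse s) x = reachR B X1 s x"
proof (cases s)
  case (fields lo hi f)
  show ?thesis
  proof (cases hi)
    case None
    show ?thesis
      using ex_in_rng_reverse_up[of hi lo "\<lambda>g. onepath B g \<and> tip_of B g \<in> fst N" f for N] None
      unfolding reachL_def reachR_def seg_reverse_def fields
      by (simp only: prod.case option.case option.map) blast
  qed (simp add: fields reachL_def reachR_def seg_reverse_def)
qed

lemma reachR_seg_reverse [simp]: "reachR B X1 (seg_reverse s) x = reachL B X1 s x"
  by (metis reachL_seg_reverse seg_reverse_reverse)

lemma walk_len_reverse: "walk_len (rev (map seg_reverse ss)) = walk_len ss"
  by (simp add: walk_len_def rev_map[symmetric] sum_list_rev o_def)

lemma walk_reverse: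
  assumes "walk X0 B X1 x y ss js"
  shows "walk X0 B X1 y x (rev (map seg_reverse ss)) (rev js)"
  using assms
proof (induction ss arbitrary: x js)
  case Nil
  then show ?case by simp
next
  case (Cons s ss)
  show ?case
  proof (cases "ss = []")
    case True
    then show ?thesis using Cons.prems by (simp add: walk_single is_seg_reverse)
  next
    case False
    then obtain j js' where js: "js = j # js'" and j: "j \<in> Node1 ` X1"
      and s: "is_seg X0 B s" "reachL B X1 s x" "reachR B X1 s j"
      and walk_ss: "walk X0 B X1 j y ss js'"
      using Cons.prems by (auto simp: walk_Cons)
    have "walk X0 B X1 j x [seg_reverse s] [] "
      using s by (simp add: walk_single is_seg_reverse)
    from walk_append[OF Cons.IH[OF walk_ss] j this] show ?thesis
      using js by simp
  qed
qed

definition seg_shift :: "int \<Rightarrow> 'v seg \<Rightarrow> 'v seg" where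
  "seg_shift k s = (case s of (lo, hi, f) \<Rightarrow>
     (map_option (\<lambda>a. a + k) lo, map_option (\<lambda>a. a + k) hi, \<lambda>i. f (i - k)))"

lemma in_rng_shift:
  "in_rng (map_option (\<lambda>a. a + k) lo) (map_option (\<lambda>a. a + k) hi) i \<longleftrightarrow> in_rng lo hi (i - k)"
  by (cases lo; cases hi) (auto simp: in_rng_def)

lemma seg_len_shift [simp]: "seg_len (seg_shift k s) = seg_len s"
  by (cases s) (auto simp: seg_shift_def seg_len_def split: option.splits)

lemma is_seg_shift:
  assumes "is_seg X0 B (lo, hi, f)"
  shows "is_seg X0 B (seg_shift k (lo, hi, f))"
proof -
  let ?lo = "map_option (\<lambda>a. a + k) lo" and ?hi = "map_option (\<lambda>a. a + k) hi"
  have "{f (i - k), f (i + 1 - k)} \<in> B" if "in_rng ?lo ?hi i" "in_rng ?lo ?hi (i + 1)" for i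
  proof -
    have "in_rng lo hi (i - k) \<and> in_rng lo hi (i - k + 1)"
      using that by (simp add: in_rng_shift algebra_simps)
    then show ?thesis using assms by (auto simp: is_seg_def algebra_simps)
  qed
  moreover have "\<exists>m. in_rng ?lo ?hi m \<and> onepath B (\<lambda>n. f (m + int n - k))" if "hi = None"
  proof -
    obtain m where "in_rng lo hi m" "onepath B (\<lambda>n. f (m + int n))"
      using assms \<open>hi = None\<close> by (auto simp: is_seg_def)
    then show ?thesis by (intro exI[of _ "m + k"]) (simp add: in_rng_shift algebra_simps)
  qed
  moreover have "\<exists>m. in_rng ?lo ?hi m \<and> onepath B (\<lambda>n. f (m - int n - k))" if "lo = None"
  proof -
    obtain m where "in_rng lo hi m" "onepath B (\<lambda>n. f (m - int n))"
      using assms \<open>lo = None\<close> by (auto simp: is_seg_def)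
    then show ?thesis by (intro exI[of _ "m + k"]) (simp add: in_rng_shift algebra_simps)
  qed
  ultimately show ?thesis
    using assms by (auto simp: is_seg_def seg_shift_def in_rng_shift)
qed

lemma reachR_seg_shift:
  assumes "reachR B X1 (lo, hi, f) x"
  shows "reachR B X1 (seg_shift k (lo, hi, f)) x"
proof (cases hi)
  case None
  then obtain N m where "N \<in> X1" "x = Node1 N" "in_rng lo hi m"
    "onepath B (\<lambda>n. f (m + int n))" "tip_of B (\<lambda>n. f (m + int n)) \<in> fst N"
    using assms by (auto simp: reachR_def)
  moreover have "in_rng (map_option (\<lambda>a. a + k) lo) (map_option (\<lambda>a. a + k) hi) (m + k)"
    using \<open>in_rng lo hi m\<close> by (simp add: in_rng_shift)
  ultimately show ?thesis using None
    by (auto simp: reachR_def seg_shift_def algebra_simps intro!: bexI[of _ N] exI[of _ "m + k"])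
qed (use assms in \<open>simp add: reachR_def seg_shift_def\<close>)

definition seg_join :: "int \<Rightarrow> 'v seg \<Rightarrow> 'v seg \<Rightarrow> 'v seg" where
  "seg_join b s t = (case s of (lo, _, f) \<Rightarrow> case t of (_, hi, g) \<Rightarrow>
     (lo, hi, \<lambda>i. if i \<le> b then f i else g i))"

lemma in_rng_join:
  assumes "\<forall>a. lo = Some a \<longrightarrow> a \<le> b" "\<forall>c. hi = Some c \<longrightarrow> b \<le> c"
  shows "i \<le> b \<Longrightarrow> in_rng lo hi i \<longleftrightarrow> in_rng lo (Some b) i"
    and "b \<le> i \<Longrightarrow> in_rng lo hi i \<longleftrightarrow> in_rng (Some b) hi i"
  using assms by (cases lo; cases hi; auto simp: in_rng_def)+

context
  fixes lo hi :: "int option" and b :: int and f g :: "int \<Rightarrow> 'v"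
  assumes lo_le: "\<forall>a. lo = Some a \<longrightarrow> a \<le> b" and le_hi: "\<forall>c. hi = Some c \<longrightarrow> b \<le> c"
    and meet: "f b = g b"
begin

private abbreviation "h \<equiv> \<lambda>i. if i \<le> b then f i else g i"

private lemma join_left: "i \<le> b \<Longrightarrow> h i = f i"
  by simp

private lemma join_right: "b \<le> i \<Longrightarrow> h i = g i"
  using meet by simp

lemma is_seg_join:
  assumes s: "is_seg X0 B (lo, Some b, f)" and t: "is_seg X0 B (Some b, hi, g)"
  shows "is_seg X0 B (seg_join b (lo, Some b, f) (Some b, hi, g))"
proof -
  note rng = in_rng_join[OF lo_le le_hi]
  have nodes: "h i \<in> X0" if "in_rng lo hi i" for i
    using s t that rng[of i] join_left[of i] join_right[of i]
    by (cases "i \<le> b") (auto simp: is_seg_def)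
  have branches: "{h i, h (i + 1)} \<in> B" if "in_rng lo hi i" "in_rng lo hi (i + 1)" for i
  proof (cases "i + 1 \<le> b")
    case True
    then show ?thesis using s that rng(1)[of i] rng(1)[of "i + 1"] by (auto simp: is_seg_def)
  next
    case False
    then show ?thesis
      using t that rng(2)[of i] rng(2)[of "i + 1"] join_right[of i] join_right[of "i + 1"]
      by (auto simp: is_seg_def)
  qed
  have up: "\<exists>m. in_rng lo hi m \<and> onepath B (\<lambda>n. h (m + int n))" if "hi = None"
  proof -
    obtain m where m: "in_rng (Some b) hi m" "onepath B (\<lambda>n. g (m + int n))"
      using t \<open>hi = None\<close> by (auto simp: is_seg_def)
    then have "b \<le> m" by (simp add: in_rng_def)
    then have "(\<lambda>n. h (m + int n)) = (\<lambda>n. g (m + int n))"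
    by (intro ext join_right) simp
    then show ?thesis using m rng(2)[OF \<open>b \<le> m\<close>] by auto
  qed
  have down: "\<exists>m. in_rng lo hi m \<and> onepath B (\<lambda>n. h (m - int n))" if "lo = None"
  proof -
    obtain m where m: "in_rng lo (Some b) m" "onepath B (\<lambda>n. f (m - int n))"
      using s \<open>lo = None\<close> by (auto simp: is_seg_def)
    then have "m \<le> b" by (simp add: in_rng_def)
    then have "(\<lambda>n. h (m - int n)) = (\<lambda>n. f (m - int n))" by auto
    then show ?thesis using m rng(1)[OF \<open>m \<le> b\<close>] by auto
  qed
  show ?thesis
    unfolding seg_join_def is_seg_def prod.case
    using lo_le le_hi nodes branches up down by fastforce
qed

lemma reachL_seg_join:
  assumes "reachL B X1 (lo, Some b, f) x"
  shows "reachL B X1 (seg_join b (lo, Some b, f) (Some b, hi, g)) x"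
proof (cases lo)
  case None
  then obtain N m where N: "N \<in> X1" "x = Node1 N" and m: "in_rng lo (Some b) m"
    "onepath B (\<lambda>n. f (m - int n))" "tip_of B (\<lambda>n. f (m - int n)) \<in> fst N"
    using assms by (auto simp: reachL_def)
  then have "m \<le> b" by (simp add: in_rng_def)
  then have "(\<lambda>n. h (m - int n)) = (\<lambda>n. f (m - int n))" by auto
  then show ?thesis
    using None N m in_rng_join(1)[OF lo_le le_hi \<open>m \<le> b\<close>]
    by (auto simp: reachL_def seg_join_def)
qed (use assms lo_le in \<open>auto simp: reachL_def seg_join_def\<close>)

lemma reachR_seg_join:
  assumes "reachR B X1 (Some b, hi, g) x"
  shows "reachR B X1 (seg_join b (lo, Some b, f) (Some b, hi, g)) x"
proof (cases hi)
  case None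
  then obtain N m where N: "N \<in> X1" "x = Node1 N" and m: "in_rng (Some b) hi m"
    "onepath B (\<lambda>n. g (m + int n))" "tip_of B (\<lambda>n. g (m + int n)) \<in> fst N"
    using assms by (auto simp: reachR_def)
  then have "b \<le> m" by (simp add: in_rng_def)
  then have "(\<lambda>n. h (m + int n)) = (\<lambda>n. g (m + int n))"
    by (intro ext join_right) simp
  then show ?thesis
    using None N m in_rng_join(2)[OF lo_le le_hi \<open>b \<le> m\<close>]
    by (auto simp: reachR_def seg_join_def)
qed (use assms le_hi join_right in \<open>auto simp: reachR_def seg_join_def\<close>)

lemma seg_len_join:
  "seg_len (seg_join b (lo, Some b, f) (Some b, hi, g)) \<le> seg_len (lo, Some b, f) + seg_len (Some b, hi, g)"
  using lo_le le_hi by (cases lo; cases hi) (auto simp: seg_join_def seg_len_def)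

end

section \<open>The wdistance is a pseudometric\<close>

lemma walk_replace_head:
  assumes "walk X0 B X1 y z (t # ts) ks" "is_seg X0 B t'" "reachL B X1 t' x"
    and "\<And>w. reachR B X1 t w \<Longrightarrow> reachR B X1 t' w"
  shows "walk X0 B X1 x z (t' # ts) ks"
  using assms by (cases "ts = []") (auto simp: walk_single walk_Cons)

lemma walk_ConsD: "walk X0 B X1 x y (s # ss) js \<Longrightarrow> is_seg X0 B s \<and> reachL B X1 s x"
  by (simp add: walk_def)

lemma reachR_Node0: "reachR B X1 s (Node0 v) \<Longrightarrow> \<exists>lo b f. s = (lo, Some b, f) \<and> f b = v"
  by (cases s) (auto simp: reachR_def split: option.splits)

lemma reachL_Node0: "reachL B X1 s (Node0 v) \<Longrightarrow> \<exists>a hi g. s = (Some a, hi, g) \<and> g a = v"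
  by (cases s) (auto simp: reachL_def split: option.splits)

lemma reachR_Node1: "reachR B X1 s (Node1 N) \<Longrightarrow> N \<in> X1"
  by (cases s) (auto simp: reachR_def split: option.splits)

lemma walk_end_Node1: "walk X0 B X1 x (Node1 N) ss js \<Longrightarrow> N \<in> X1"
  by (auto simp: walk_def intro: reachR_Node1)

text \<open>The first segment of the second walk is shifted to start at the index where the
  last segment of the first walk ends, and the two are glued there.\<close>

lemma walk_single_join_Node0:
  assumes "walk X0 B X1 x (Node0 v) [s] []" "walk X0 B X1 (Node0 v) z (t # ts) ks"
  shows "\<exists>s'. walk X0 B X1 x z (s' # ts) ks \<and> seg_len s' \<le> seg_len s + seg_len t"
proof -
  have s: "is_seg X0 B s" "reachL B X1 s x" "reachR B X1 s (Node0 v)"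
    using assms(1) by (auto simp: walk_single)
  have t: "is_seg X0 B t" "reachL B X1 t (Node0 v)"
    using walk_ConsD[OF assms(2)] by auto
  obtain lo b f where sf: "s = (lo, Some b, f)" "f b = v" using reachR_Node0[OF s(3)] by blast
  obtain a hi g where tg: "t = (Some a, hi, g)" "g a = v" using reachL_Node0[OF t(2)] by blast
  define hi' where "hi' = map_option (\<lambda>c. c + (b - a)) hi"
  define g' where "g' = (\<lambda>i. g (i - (b - a)))"
  have shift: "seg_shift (b - a) t = (Some b, hi', g')"
    by (simp add: tg seg_shift_def hi'_def g'_def)
  have "is_seg X0 B (Some b, hi', g')" using is_seg_shift t(1) by (metis shift tg(1))
  then have lo_le: "\<forall>c. lo = Some c \<longrightarrow> c \<le> b" and le_hi: "\<forall>c. hi' = Some c \<longrightarrow> b \<le> c"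
    using s(1) by (auto simp: sf is_seg_def)
  have meet: "f b = g' b" using sf tg by (simp add: g'_def)
  note join = is_seg_join[where lo=lo and hi=hi' and b=b and f=f and g=g', OF lo_le le_hi meet]
    reachL_seg_join[where lo=lo and hi=hi' and b=b and f=f and g=g', OF lo_le le_hi meet]
    reachR_seg_join[where lo=lo and hi=hi' and b=b and f=f and g=g', OF lo_le le_hi meet]
    seg_len_join[where lo=lo and hi=hi' and b=b and f=f and g=g', OF lo_le le_hi meet]
  let ?s' = "seg_join b s (Some b, hi', g')"
  have "walk X0 B X1 x z (?s' # ts) ks"
  proof (rule walk_replace_head[OF assms(2)])
    show "is_seg X0 B ?s'" using join(1) s(1) \<open>is_seg X0 B (Some b, hi', g')\<close> by (simp add: sf)
    show "reachL B X1 ?s' x" using join(2) s(2) by (simp add: sf)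
    show "reachR B X1 ?s' w" if "reachR B X1 t w" for w
      using join(3) reachR_seg_shift[OF that[unfolded tg], of "b - a"] shift by (simp add: sf tg)
  qed
  moreover have "seg_len ?s' \<le> seg_len s + seg_len t"
    using join(4) seg_len_shift[of "b - a" t] by (simp add: sf shift)
  ultimately show ?thesis by blast
qed

lemma walk_join_Node0:
  assumes "walk X0 B X1 x (Node0 v) ss js" "walk X0 B X1 (Node0 v) z ts ks"
  shows "\<exists>ss' js'. walk X0 B X1 x z ss' js' \<and> walk_len ss' \<le> walk_len ss + walk_len ts"
  using assms(1)
proof (induction ss arbitrary: x js)
  case Nil
  then show ?case by simp
next
  case (Cons s ss)
  obtain t ts' where ts: "ts = t # ts'" using assms(2) by (cases ts) auto
  show ?case
  proof (cases "ss = []")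
    case True
    then have "walk X0 B X1 x (Node0 v) [s] []" using Cons.prems by (simp add: walk_single)
    from walk_single_join_Node0[OF this assms(2)[unfolded ts]] obtain s' where
      "walk X0 B X1 x z (s' # ts') ks" "seg_len s' \<le> seg_len s + seg_len t"
      by blast
    moreover from this(2) have "walk_len (s' # ts') \<le> walk_len [s] + walk_len ts"
      by (simp add: ts) (metis add.assoc add_right_mono)
    ultimately show ?thesis using True by blast
  next
    case False
    then obtain j js' where j: "j \<in> Node1 ` X1" and js: "js = j # js'"
      and s: "is_seg X0 B s" "reachL B X1 s x" "reachR B X1 s j"
      and walk_ss: "walk X0 B X1 j (Node0 v) ss js'"
      using Cons.prems by (auto simp: walk_Cons)
    obtain ss' js'' where walk_ss': "walk X0 B X1 j z ss' js''"
      and len: "walk_len ss' \<le> walk_len ss + walk_len ts"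
      using Cons.IH[OF walk_ss] by blast
    have "ss' \<noteq> []" using walk_ss' by auto
    then have "walk X0 B X1 x z (s # ss') (j # js'')"
      using walk_ss' j s by (simp add: walk_Cons)
    moreover have "walk_len (s # ss') \<le> walk_len (s # ss) + walk_len ts"
      using len by (simp add: add_left_mono add.assoc)
    ultimately show ?thesis by blast
  qed
qed

lemma walk_concat:
  assumes "walk X0 B X1 x y ss js" "walk X0 B X1 y z ts ks"
  shows "\<exists>ss' js'. walk X0 B X1 x z ss' js' \<and> walk_len ss' \<le> walk_len ss + walk_len ts"
proof (cases y)
  case (Node0 v)
  then show ?thesis using walk_join_Node0 assms by simp
next
  case (Node1 N)
  then have "y \<in> Node1 ` X1" using walk_end_Node1 assms(1) by blast
  then show ?thesis using walk_append[OF assms(1) _ assms(2)] by fastforce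
qed

lemma wdist_le_walk_len: "walk X0 B X1 x y ss js \<Longrightarrow> wdist X0 B X1 x y \<le> walk_len ss"
  unfolding wdist_def by (rule Least_le) blast

lemma wdist_attained:
  assumes "walk X0 B X1 x y ss js"
  obtains ss' js' where "walk X0 B X1 x y ss' js'" "wdist X0 B X1 x y = walk_len ss'"
proof -
  have "\<exists>ss' js'. walk X0 B X1 x y ss' js' \<and> wdist X0 B X1 x y = walk_len ss'"
    unfolding wdist_def by (rule LeastI_ex) (use assms in blast)
  then show ?thesis using that by blast
qed

lemma wdist_triangle:
  assumes "wconnected X0 B X1" "x \<in> gnodes X0 X1" "y \<in> gnodes X0 X1" "z \<in> gnodes X0 X1"
  shows "wdist X0 B X1 x z \<le> wdist X0 B X1 x y + wdist X0 B X1 y z"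
proof -
  obtain ss js ts ks where "walk X0 B X1 x y ss js" "walk X0 B X1 y z ts ks"
    using assms unfolding wconnected_def by blast
  then obtain ss' js' ts' ks' where
    xy: "walk X0 B X1 x y ss' js'" "wdist X0 B X1 x y = walk_len ss'" and
    yz: "walk X0 B X1 y z ts' ks'" "wdist X0 B X1 y z = walk_len ts'"
    by (metis wdist_attained)
  obtain us ls where "walk X0 B X1 x z us ls" "walk_len us \<le> walk_len ss' + walk_len ts'"
    using walk_concat[OF xy(1) yz(1)] by blast
  then show ?thesis using wdist_le_walk_len xy(2) yz(2) by (metis order_trans)
qed

lemma wdist_le_commute:
  assumes "walk X0 B X1 x y ss js"
  shows "wdist X0 B X1 y x \<le> wdist X0 B X1 x y"
proof -
  obtain ss' js' where xy: "walk X0 B X1 x y ss' js'" "wdist X0 B X1 x y = walk_len ss'"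
    using wdist_attained[OF assms] .
  show ?thesis
    using wdist_le_walk_len[OF walk_reverse[OF xy(1)]] xy(2) by (simp add: walk_len_reverse)
qed

lemma wdist_commute:
  assumes "wconnected X0 B X1" "x \<in> gnodes X0 X1" "y \<in> gnodes X0 X1"
  shows "wdist X0 B X1 x y = wdist X0 B X1 y x"
  using assms unfolding wconnected_def by (metis wdist_le_commute order_antisym)

section \<open>1-galaxies and closeness\<close>

lemma hypernode_range_gnodes: "hypernode X0 X1 x \<Longrightarrow> range x \<subseteq> gnodes X0 X1"
  by (auto simp: hypernode_def gnodes_def)

lemma galaxy1_hypernode: "galaxy1 X0 B X1 F \<Gamma> \<Longrightarrow> y \<in> \<Gamma> \<Longrightarrow> hypernode X0 X1 y"
  by (auto simp: galaxy1_def)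

lemma principal_galaxy_hypernode: "y \<in> principal_galaxy X0 B X1 F \<Longrightarrow> hypernode X0 X1 y"
  by (simp add: principal_galaxy_def)

lemma ldist_const: "ldist X0 B X1 F (\<lambda>_. s) (\<lambda>_. t)"
proof -
  obtain k where "wdist X0 B X1 s t \<le> omega_times k"
    using le_omega_times by blast
  then show ?thesis unfolding ldist_def by (blast intro: always_eventually)
qed

lemma ldist_commute:
  assumes "wconnected X0 B X1" "range x \<subseteq> gnodes X0 X1" "range y \<subseteq> gnodes X0 X1"
    and "ldist X0 B X1 F x y"
  shows "ldist X0 B X1 F y x"
proof -
  obtain k where "eventually (\<lambda>n. wdist X0 B X1 (x n) (y n) \<le> omega_times k) F"
    using assms(4) by (auto simp: ldist_def)
  then have "eventually (\<lambda>n. wdist X0 B X1 (y n) (x n) \<le> omega_times k) F"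
    by (rule eventually_mono) (metis wdist_commute assms(1-3) rangeI subsetD)
  then show ?thesis by (auto simp: ldist_def)
qed

lemma ldist_trans:
  assumes "wconnected X0 B X1"
    and "range x \<subseteq> gnodes X0 X1" "range y \<subseteq> gnodes X0 X1" "range z \<subseteq> gnodes X0 X1"
    and "ldist X0 B X1 F x y" "ldist X0 B X1 F y z"
  shows "ldist X0 B X1 F x z"
proof -
  obtain k l where
    "eventually (\<lambda>n. wdist X0 B X1 (x n) (y n) \<le> omega_times k) F"
    "eventually (\<lambda>n. wdist X0 B X1 (y n) (z n) \<le> omega_times l) F"
    using assms(5,6) by (auto simp: ldist_def)
  then have "eventually (\<lambda>n. wdist X0 B X1 (x n) (z n) \<le> omega_times (k + l)) F"
  proof eventually_elim
    case (elim n)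
    have "wdist X0 B X1 (x n) (z n) \<le> wdist X0 B X1 (x n) (y n) + wdist X0 B X1 (y n) (z n)"
      using wdist_triangle assms(1-4) by blast
    also have "\<dots> \<le> omega_times k + omega_times l"
      using elim by (rule add_mono)
    also have "\<dots> = omega_times (k + l)"
      by (simp add: omega_times_add)
    finally show ?case .
  qed
  then show ?thesis by (auto simp: ldist_def)
qed

lemma galaxy1_ldist:
  assumes "wconnected X0 B X1" "galaxy1 X0 B X1 F \<Gamma>" "y \<in> \<Gamma>" "z \<in> \<Gamma>"
  shows "ldist X0 B X1 F y z"
proof -
  obtain x where x: "hypernode X0 X1 x" and \<Gamma>: "\<Gamma> = {y. hypernode X0 X1 y \<and> ldist X0 B X1 F x y}"
    using assms(2) by (auto simp: galaxy1_def)
  have "range x \<subseteq> gnodes X0 X1" "range y \<subseteq> gnodes X0 X1" "range z \<subseteq> gnodes X0 X1"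
    using x assms(3,4) \<Gamma> by (auto dest: hypernode_range_gnodes)
  moreover have "ldist X0 B X1 F x y" "ldist X0 B X1 F x z"
    using assms(3,4) \<Gamma> by auto
  ultimately show ?thesis
    using ldist_trans[OF assms(1)] ldist_commute[OF assms(1)] by metis
qed

lemma principal_galaxy_ldist:
  assumes "wconnected X0 B X1" "x \<in> principal_galaxy X0 B X1 F" "x' \<in> principal_galaxy X0 B X1 F"
  shows "ldist X0 B X1 F x x'"
proof -
  obtain s s' where s: "s \<in> gnodes X0 X1" "ldist X0 B X1 F (\<lambda>_. s) x"
    and s': "s' \<in> gnodes X0 X1" "ldist X0 B X1 F (\<lambda>_. s') x'"
    using assms(2,3) by (auto simp: principal_galaxy_def)
  have ranges: "range x \<subseteq> gnodes X0 X1" "range x' \<subseteq> gnodes X0 X1"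
    "range (\<lambda>_. s) \<subseteq> gnodes X0 X1" "range (\<lambda>_. s') \<subseteq> gnodes X0 X1"
    using assms(2,3) s s' by (auto dest: hypernode_range_gnodes principal_galaxy_hypernode)
  have "ldist X0 B X1 F x (\<lambda>_. s')"
    using ldist_trans[OF assms(1) ranges(1,3,4) ldist_commute[OF assms(1) ranges(3,1) s(2)] ldist_const] .
  then show ?thesis
    using ldist_trans[OF assms(1) ranges(1,4,2) _ s'(2)] by blast
qed

lemma gap_transfer:
  fixes d :: "'a \<Rightarrow> 'a \<Rightarrow> 'b::ordered_ab_semigroup_add_imp_le"
  assumes triangle: "\<And>u v w. u \<in> S \<Longrightarrow> v \<in> S \<Longrightarrow> w \<in> S \<Longrightarrow> d u w \<le> d u v + d v w"
    and commute: "\<And>u v. u \<in> S \<Longrightarrow> v \<in> S \<Longrightarrow> d u v = d v u"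
    and S: "z \<in> S" "x \<in> S" "y' \<in> S" "x' \<in> S" "z' \<in> S"
    and gap: "d y x + (c + a + b + b) \<le> d z x"
    and near: "d z y' \<le> a" "d x x' \<le> b"
    and far: "d y' x' \<le> d z' x'"
  shows "d y x + c \<le> d z' x"
proof -
  have "d y x + c + (a + b + b) = d y x + (c + a + b + b)"
    by (simp add: ac_simps)
  also have "\<dots> \<le> d z x"
    by (rule gap)
  also have "\<dots> \<le> d z y' + (d y' x' + d x' x)"
    using triangle[OF S(1,3,2)] add_left_mono[OF triangle[OF S(3,4,2)]] by (rule order_trans)
  also have "\<dots> \<le> a + (d z' x' + b)"
    using near far commute[OF S(2,4)] by (metis add_mono)
  also have "\<dots> \<le> a + (d z' x + b + b)"
    using triangle[OF S(5,2,4)] near(2) by (metis add_mono order_refl order_trans)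
  also have "\<dots> = d z' x + (a + b + b)"
    by (simp add: ac_simps)
  finally show ?thesis by (rule add_le_imp_le_right)
qed

lemma wdist_gap_transfer:
  assumes wc: "wconnected X0 B X1"
    and ranges: "range z \<subseteq> gnodes X0 X1" "range x \<subseteq> gnodes X0 X1" "range y' \<subseteq> gnodes X0 X1"
      "range x' \<subseteq> gnodes X0 X1" "range z' \<subseteq> gnodes X0 X1"
    and near: "ldist X0 B X1 F z y'" "ldist X0 B X1 F x x'"
    and gap: "\<forall>m. eventually (\<lambda>n. wdist X0 B X1 (z n) (x n) \<ge> wdist X0 B X1 (y n) (x n) + omega_times m) F"
    and far: "eventually (\<lambda>n. wdist X0 B X1 (z' n) (x' n) \<ge> wdist X0 B X1 (y' n) (x' n)) F"
  shows "\<forall>m. eventually (\<lambda>n. wdist X0 B X1 (z' n) (x n) \<ge> wdist X0 B X1 (y n) (x n) + omega_times m) F"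
proof
  fix m
  obtain a where a: "eventually (\<lambda>n. wdist X0 B X1 (z n) (y' n) \<le> omega_times a) F"
    using near(1) by (auto simp: ldist_def)
  obtain b where b: "eventually (\<lambda>n. wdist X0 B X1 (x n) (x' n) \<le> omega_times b) F"
    using near(2) by (auto simp: ldist_def)
  have "eventually (\<lambda>n. wdist X0 B X1 (z n) (x n) \<ge>
      wdist X0 B X1 (y n) (x n) + omega_times (m + a + b + b)) F"
    using gap by blast
  then show "eventually (\<lambda>n. wdist X0 B X1 (z' n) (x n) \<ge> wdist X0 B X1 (y n) (x n) + omega_times m) F"
    using a b far
  proof eventually_elim
    case (elim n)
    have S: "z n \<in> gnodes X0 X1" "x n \<in> gnodes X0 X1" "y' n \<in> gnodes X0 X1"
      "x' n \<in> gnodes X0 X1" "z' n \<in> gnodes X0 X1"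
      using ranges by auto
    show ?case
      using gap_transfer[OF wdist_triangle[OF wc] wdist_commute[OF wc] S,
          where y = "y n" and c = "omega_times m" and a = "omega_times a" and b = "omega_times b"]
        elim
      by (simp add: omega_times_add)
  qed
qed

theorem theorem11p3:
  fixes X0 :: "'v set" and B :: "'v set set" and X1 :: "'v node1 set"
    and F :: "nat filter" and Ga Gb Gc :: "(nat \<Rightarrow> 'v gnode) set"
  assumes "one_graph X0 B X1"
    and "wconnected X0 B X1"
    and "infinite (boundary_nodes X0 B X1)"
    and "free_ultrafilter F"
    and "\<exists>x. hypernode X0 X1 x \<and> x \<notin> principal_galaxy X0 B X1 F"
    and "galaxy1 X0 B X1 F Ga" and "galaxy1 X0 B X1 F Gb" and "galaxy1 X0 B X1 F Gc"
    and "Ga \<noteq> principal_galaxy X0 B X1 F" and "Gb \<noteq> principal_galaxy X0 B X1 F"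
    and "Gc \<noteq> principal_galaxy X0 B X1 F"
    and "closer X0 B X1 F Ga Gb" and "closer X0 B X1 F Gb Gc"
  shows "closer X0 B X1 F Ga Gc"
proof -
  let ?d = "wdist X0 B X1" and ?P = "principal_galaxy X0 B X1 F"
  obtain y z x where y: "y \<in> Ga" and z: "z \<in> Gb" and x: "x \<in> ?P"
    and gap: "\<forall>m. eventually (\<lambda>n. ?d (z n) (x n) \<ge> ?d (y n) (x n) + omega_times m) F"
    using assms(12) unfolding closer_def by blast
  obtain y' z' x' where y': "y' \<in> Gb" and z': "z' \<in> Gc" and x': "x' \<in> ?P"
    and gap': "\<forall>m. eventually (\<lambda>n. ?d (z' n) (x' n) \<ge> ?d (y' n) (x' n) + omega_times m) F"
    using assms(13) unfolding closer_def by blast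
  have far: "eventually (\<lambda>n. ?d (z' n) (x' n) \<ge> ?d (y' n) (x' n)) F"
    using gap'[rule_format, of 0] by simp
  have "hypernode X0 X1 z" "hypernode X0 X1 x" "hypernode X0 X1 y'" "hypernode X0 X1 x'"
    "hypernode X0 X1 z'"
    using galaxy1_hypernode[OF assms(7) z] principal_galaxy_hypernode[OF x]
      galaxy1_hypernode[OF assms(7) y'] principal_galaxy_hypernode[OF x']
      galaxy1_hypernode[OF assms(8) z'] .
  note ranges = this[THEN hypernode_range_gnodes]
  have "\<forall>m. eventually (\<lambda>n. ?d (z' n) (x n) \<ge> ?d (y n) (x n) + omega_times m) F"
    using wdist_gap_transfer[OF assms(2) ranges galaxy1_ldist[OF assms(2,7) z y']
        principal_galaxy_ldist[OF assms(2) x x'] gap far] .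
  then show ?thesis
    unfolding closer_def using y z' x by blast
qed

end
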